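(* Let $\rho$ be a $(0,\infty)$-valued random variable with $\mathbb E\rho=1$, let $K\in(0,\infty)$, and $g(x)=\mathbb E\big[\frac{K\rho+x}{1+(K\rho+x)}\big]$, $x\in[0,\infty)$. Then $g$ has a unique fixed point $M\in(0,1)$, and $g$ is a strict contraction around $M$: there is $\beta\in(0,1)$ with $0\le\frac{g(x)-M}{x-M}\le\beta$ for all $x\in[0,\infty)\setminus\{M\}$ (one may take $\beta=1-g(0)/M$). *)

theory Defs
  imports "HOL-Probability.Probability"
begin

end

theory Submission
  imports Defs
begin

text \<open>
  With \<open>Z = K\<rho>\<close> and \<open>f t = t/(1+t)\<close> one has \<open>f(Z+x) - f(Z+y) = (x-y)/((1+Z+x)(1+Z+y))\<close>, so
  \<open>g x - g y = (x - y) W(x,y)\<close> with the weight \<open>W(x,y) = E[1/((1+Z+x)(1+Z+y))] \<in> (0,1]\<close>, which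
  decreases in \<open>x\<close>. Hence \<open>g\<close> is 1-Lipschitz; with \<open>0 < g 0\<close> and \<open>g < 1\<close> the intermediate value
  theorem gives a fixed point \<open>m\<close>, and \<open>(g x - m)/(x - m) = W(x,m) \<le> W(0,m) = 1 - g 0 / m < 1\<close>.
\<close>

lemma saturation_diff:
  fixes r x y :: real
  assumes "1 + r + x \<noteq> 0" "1 + r + y \<noteq> 0"
  shows "(r + x) / (1 + (r + x)) - (r + y) / (1 + (r + y)) = (x - y) / ((1 + r + x) * (1 + r + y))"
  using assms by (simp add: field_simps)

lemma (in prob_space) expectation_pos:
  fixes h :: "'a \<Rightarrow> real"
  assumes "integrable M h" "\<And>w. w \<in> space M \<Longrightarrow> h w > 0"
  shows "expectation h > 0"
proof -
  have "expectation (\<lambda>_. 0) < expectation h"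
    using assms by (intro integral_less_AE_space) (auto intro!: AE_I2 simp: emeasure_space_1)
  then show ?thesis by simp
qed

locale saturation_mean = prob_space +
  fixes Z :: "'a \<Rightarrow> real"
  assumes Z_measurable[measurable]: "Z \<in> borel_measurable M"
    and Z_pos: "\<And>w. w \<in> space M \<Longrightarrow> Z w > 0"
begin

definition G :: "real \<Rightarrow> real" where
  "G x = expectation (\<lambda>w. (Z w + x) / (1 + (Z w + x)))"

definition W :: "real \<Rightarrow> real \<Rightarrow> real" where
  "W x y = expectation (\<lambda>w. 1 / ((1 + Z w + x) * (1 + Z w + y)))"

lemma weight_integrand_le_1:
  assumes "w \<in> space M" "x \<ge> 0" "y \<ge> 0"
  shows "1 / ((1 + Z w + x) * (1 + Z w + y)) \<le> 1"
proof -
  have "1 * 1 \<le> (1 + Z w + x) * (1 + Z w + y)"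
    using Z_pos[OF assms(1)] assms(2,3) by (intro mult_mono) auto
  then show ?thesis by simp
qed

lemma integrable_saturation:
  assumes "x \<ge> 0"
  shows "integrable M (\<lambda>w. (Z w + x) / (1 + (Z w + x)))"
proof (rule integrable_const_bound[where B = 1])
  show "AE w in M. norm ((Z w + x) / (1 + (Z w + x))) \<le> 1"
    using Z_pos assms by (intro AE_I2) (fastforce simp: abs_le_iff divide_le_eq_1)
qed measurable

lemma integrable_weight:
  assumes "x \<ge> 0" "y \<ge> 0"
  shows "integrable M (\<lambda>w. 1 / ((1 + Z w + x) * (1 + Z w + y)))"
proof (rule integrable_const_bound[where B = 1])
  show "AE w in M. norm (1 / ((1 + Z w + x) * (1 + Z w + y))) \<le> 1"
    using weight_integrand_le_1 Z_pos assms by (intro AE_I2) (fastforce simp: abs_le_iff)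
qed measurable

lemma weight_pos:
  assumes "x \<ge> 0" "y \<ge> 0"
  shows "W x y > 0"
  unfolding W_def using Z_pos assms
  by (intro expectation_pos integrable_weight) (fastforce intro!: divide_pos_pos mult_pos_pos)+

lemma weight_le_1:
  assumes "x \<ge> 0" "y \<ge> 0"
  shows "W x y \<le> 1"
proof -
  have "W x y \<le> expectation (\<lambda>_. 1)"
    unfolding W_def using weight_integrand_le_1 assms
    by (intro integral_mono integrable_weight) auto
  then show ?thesis by (simp add: prob_space)
qed

lemma weight_antimono:
  assumes "0 \<le> x'" "x' \<le> x" "y \<ge> 0"
  shows "W x y \<le> W x' y"
  unfolding W_def
proof (rule integral_mono[OF integrable_weight integrable_weight])
  fix w assume w: "w \<in> space M"
  have "(1 + Z w + x') * (1 + Z w + y) \<le> (1 + Z w + x) * (1 + Z w + y)"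
    using Z_pos[OF w] assms by (intro mult_right_mono) auto
  then show "1 / ((1 + Z w + x) * (1 + Z w + y)) \<le> 1 / ((1 + Z w + x') * (1 + Z w + y))"
    using Z_pos[OF w] assms by (intro divide_left_mono) auto
qed (use assms in auto)

lemma G_diff:
  assumes "x \<ge> 0" "y \<ge> 0"
  shows "G x - G y = (x - y) * W x y"
proof -
  have "G x - G y = expectation (\<lambda>w. (Z w + x) / (1 + (Z w + x)) - (Z w + y) / (1 + (Z w + y)))"
    unfolding G_def using assms by (intro Bochner_Integration.integral_diff[symmetric] integrable_saturation)
  also have "\<dots> = expectation (\<lambda>w. (x - y) * (1 / ((1 + Z w + x) * (1 + Z w + y))))"
  proof (intro Bochner_Integration.integral_cong refl)
    fix w assume "w \<in> space M"
    then have "1 + Z w + x \<noteq> 0" "1 + Z w + y \<noteq> 0" using Z_pos assms by force+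
    then show "(Z w + x) / (1 + (Z w + x)) - (Z w + y) / (1 + (Z w + y)) = (x - y) * (1 / ((1 + Z w + x) * (1 + Z w + y)))"
      by (simp add: saturation_diff)
  qed
  also have "\<dots> = (x - y) * W x y"
    unfolding W_def by (rule Bochner_Integration.integral_mult_right_zero)
  finally show ?thesis .
qed

lemma G_0_pos: "G 0 > 0"
  unfolding G_def using Z_pos by (intro expectation_pos integrable_saturation) (auto intro!: divide_pos_pos add_pos_pos Z_pos)

lemma G_less_1:
  assumes "x \<ge> 0"
  shows "G x < 1"
proof -
  have "G x < expectation (\<lambda>_. 1)"
    unfolding G_def using Z_pos assms
    by (intro integral_less_AE_space integrable_saturation)
       (auto intro!: AE_I2 simp: emeasure_space_1 divide_less_eq_1 dest: Z_pos)
  then show ?thesis by (simp add: prob_space)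
qed

lemma G_lipschitz: "1-lipschitz_on {0..} G"
proof (rule lipschitz_onI)
  fix x y :: real assume "x \<in> {0..}" "y \<in> {0..}"
  then have xy: "x \<ge> 0" "y \<ge> 0" by auto
  have "\<bar>G x - G y\<bar> = \<bar>x - y\<bar> * W x y"
    using G_diff[OF xy] weight_pos[OF xy] by (simp add: abs_mult)
  also have "\<dots> \<le> \<bar>x - y\<bar>"
    using weight_le_1[OF xy] by (simp add: mult_left_le)
  finally show "dist (G x) (G y) \<le> 1 * dist x y" by (simp add: dist_real_def)
qed simp

lemma G_fixed_point_exists: "\<exists>m. 0 < m \<and> m < 1 \<and> G m = m"
proof -
  have "continuous_on {0..1} (\<lambda>x. G x - x)"
    using lipschitz_on_continuous_on[OF lipschitz_on_subset[OF G_lipschitz]]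
    by (intro continuous_intros) auto
  then obtain m where m: "0 \<le> m" "m \<le> 1" "G m - m = 0"
    using IVT2'[of "\<lambda>x. G x - x" 1 0 0] G_0_pos G_less_1[of 1] by auto
  have "m \<noteq> 0" using m G_0_pos by auto
  moreover have "m \<noteq> 1" using m G_less_1[of 1] by auto
  ultimately show ?thesis using m by (intro exI[of _ m]) auto
qed

context
  fixes m :: real
  assumes m_pos: "m > 0" and m_fixed: "G m = m"
begin

lemma difference_quotient_at_fixed_point:
  assumes "x \<ge> 0" "x \<noteq> m"
  shows "(G x - m) / (x - m) = W x m"
  using G_diff[of x m] assms m_pos m_fixed by simp

lemma contraction_constant_eq: "1 - G 0 / m = W 0 m"
  using G_diff[of 0 m] m_pos m_fixed by (simp add: field_simps)

lemma contraction_at_fixed_point: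
  "0 < 1 - G 0 / m \<and> 1 - G 0 / m < 1 \<and>
   (\<forall>x\<ge>0. x \<noteq> m \<longrightarrow> 0 \<le> (G x - m) / (x - m) \<and> (G x - m) / (x - m) \<le> 1 - G 0 / m)"
  using contraction_constant_eq weight_pos[of 0 m] divide_pos_pos[OF G_0_pos m_pos] m_pos
    difference_quotient_at_fixed_point weight_pos weight_antimono[of 0 _ m]
  by (auto simp: less_imp_le)

lemma fixed_point_unique:
  assumes "y \<ge> 0" "G y = y"
  shows "y = m"
proof (rule ccontr)
  assume "y \<noteq> m"
  then have "(G y - m) / (y - m) = 1" using assms(2) by simp
  then show False using contraction_at_fixed_point assms(1) \<open>y \<noteq> m\<close> by fastforce
qed

end

end

theorem lemma7p2:
  fixes M :: "'a measure" and \<rho> :: "'a \<Rightarrow> real" and K :: real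
    and g :: "real \<Rightarrow> real"
  assumes "prob_space M"
    and "\<rho> \<in> borel_measurable M"
    and "\<forall>\<omega>\<in>space M. \<rho> \<omega> > 0"
    and "integrable M \<rho>"
    and "prob_space.expectation M \<rho> = 1"
    and "K > 0"
    and "\<And>x. g x = prob_space.expectation M (\<lambda>\<omega>. (K * \<rho> \<omega> + x) / (1 + (K * \<rho> \<omega> + x)))"
  shows "\<exists>m. 0 < m \<and> m < 1 \<and> g m = m \<and> (\<forall>y\<ge>0. g y = y \<longrightarrow> y = m)
          \<and> (\<exists>\<beta>. 0 < \<beta> \<and> \<beta> < 1 \<and>
               (\<forall>x\<ge>0. x \<noteq> m \<longrightarrow> 0 \<le> (g x - m) / (x - m) \<and> (g x - m) / (x - m) \<le> \<beta>))
          \<and> (let \<beta> = 1 - g 0 / m in 0 < \<beta> \<and> \<beta> < 1 \<and>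
               (\<forall>x\<ge>0. x \<noteq> m \<longrightarrow> 0 \<le> (g x - m) / (x - m) \<and> (g x - m) / (x - m) \<le> \<beta>))"
proof -
  interpret saturation_mean M "\<lambda>\<omega>. K * \<rho> \<omega>"
  proof (rule saturation_mean.intro[OF assms(1)], unfold_locales)
    show "(\<lambda>\<omega>. K * \<rho> \<omega>) \<in> borel_measurable M" using assms(2) by simp
    show "\<And>\<omega>. \<omega> \<in> space M \<Longrightarrow> 0 < K * \<rho> \<omega>" using assms(3,6) by simp
  qed
  have g_eq: "g = G"
    using assms(7) by (simp add: G_def fun_eq_iff)
  obtain m where m: "0 < m" "m < 1" "G m = m"
    using G_fixed_point_exists by blast
  note contraction = contraction_at_fixed_point[OF m(1,3)]
  show ?thesis
    unfolding g_eq Let_def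
  proof (rule exI[of _ m], intro conjI)
    show "\<forall>y\<ge>0. G y = y \<longrightarrow> y = m" using fixed_point_unique[OF m(1,3)] by blast
    show "\<exists>\<beta>. 0 < \<beta> \<and> \<beta> < 1 \<and>
        (\<forall>x\<ge>0. x \<noteq> m \<longrightarrow> 0 \<le> (G x - m) / (x - m) \<and> (G x - m) / (x - m) \<le> \<beta>)"
      using contraction by blast
  qed (use m contraction in blast)+
qed

end
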